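(* Let $X$ be a topological space and $f\colon X\to\mathbb{R}^d$ an injective function. Suppose that the image $f(X)$ is not contained in an affine line in $\mathbb{R}^d$. Then $\alpha(f)=0$ if and only if $f$ is continuous.
   Context: $\mathrm{Conf}_2(X)=\{(x,y)\in X\times X: x\neq y\}$ with the subspace topology. $S^{d-1}$ carries the geodesic metric $d(u,v)=\arccos\langle u,v\rangle$. For a topological space $X$ and a metric space $Y$, $\delta(g)=\inf\{\delta\ge 0 : \text{for every } x\in X \text{ there is an open neighborhood } U_x \text{ of } x \text{ with } \operatorname{diam}(g(U_x))\le\delta\}$. For injective $f\colon X\to\mathbb{R}^d$, $\Phi_f\colon\mathrm{Conf}_2(X)\to S^{d-1}$, $\Phi_f(x,y)=\frac{f(x)-f(y)}{\|f(x)-f(y)\|}$, and $\alpha(f)=\delta(\Phi_f)$. *)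

theory Defs
  imports "HOL-Analysis.Analysis"
begin

definition conf2 :: "'a topology \<Rightarrow> ('a \<times> 'a) topology" where
  "conf2 X = subtopology (prod_topology X X) {(x, y). x \<noteq> y}"

definition sphere_dist :: "'b::real_inner \<Rightarrow> 'b \<Rightarrow> real" where
  "sphere_dist u v = arccos (inner u v)"

definition sphere_diam :: "'b::real_inner set \<Rightarrow> real" where
  "sphere_diam S = (SUP p\<in>S \<times> S. sphere_dist (fst p) (snd p))"

definition delta :: "'c topology \<Rightarrow> ('c \<Rightarrow> 'b::real_inner) \<Rightarrow> real" where
  "delta T g = Inf {d. d \<ge> 0 \<and> (\<forall>x\<in>topspace T. \<exists>U. openin T U \<and> x \<in> U \<and> sphere_diam (g ` U) \<le> d)}"

definition Phi :: "('a \<Rightarrow> 'b::real_normed_vector) \<Rightarrow> 'a \<times> 'a \<Rightarrow> 'b" where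
  "Phi f p = (f (fst p) - f (snd p)) /\<^sub>R norm (f (fst p) - f (snd p))"

definition alpha :: "'a topology \<Rightarrow> ('a \<Rightarrow> 'b::euclidean_space) \<Rightarrow> real" where
  "alpha X f = delta (conf2 X) (Phi f)"

end

theory Submission
  imports Defs
begin

text \<open>
  For unit vectors the geodesic distance \<open>\<theta> = arccos \<langle>u, v\<rangle>\<close> and the chord
  \<open>\<parallel>u - v\<parallel> = 2 sin (\<theta> / 2)\<close> control each other, so \<open>\<alpha>(f) = 0\<close> says exactly that
  \<open>\<Phi>\<^sub>f\<close> is continuous on \<open>Conf\<^sub>2(X)\<close>; and \<open>\<Phi>\<^sub>f\<close> is continuous whenever \<open>f\<close> is.

  Conversely, let \<open>\<Phi>\<^sub>f\<close> be continuous. If every neighbourhood of \<open>x\<close> contained some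
  \<open>y \<noteq> x\<close>, continuity at \<open>(x, z)\<close> would force \<open>\<Phi>\<^sub>f(x, z) = \<Phi>\<^sub>f(y, z)\<close> for every third
  point \<open>z\<close>, putting \<open>f(X)\<close> on the line through \<open>f x\<close> and \<open>f y\<close>; so \<open>X\<close> is T1.
  Given \<open>x\<close>, choose \<open>y, z\<close> with \<open>f x, f y, f z\<close> not collinear. On the open set of points
  \<open>w \<noteq> y, z\<close> from which \<open>f y\<close> and \<open>f z\<close> are seen in non-parallel directions, \<open>f w\<close> is the
  intersection of the lines \<open>f y + \<real> \<Phi>\<^sub>f(w, y)\<close> and \<open>f z + \<real> \<Phi>\<^sub>f(w, z)\<close>, a continuous
  function of \<open>w\<close>.
\<close>

lemma continuous_map_scaleR [continuous_intros]:
  fixes g :: "'a \<Rightarrow> 'b::real_normed_vector"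
  shows "continuous_map X euclidean f \<Longrightarrow> continuous_map X euclidean g \<Longrightarrow>
    continuous_map X euclidean (\<lambda>x. f x *\<^sub>R g x)"
  by (simp add: continuous_map_atin tendsto_scaleR)

lemma continuous_map_inner [continuous_intros]:
  fixes f g :: "'a \<Rightarrow> 'b::real_inner"
  shows "continuous_map X euclidean f \<Longrightarrow> continuous_map X euclidean g \<Longrightarrow>
    continuous_map X euclidean (\<lambda>x. f x \<bullet> g x)"
  by (simp add: continuous_map_atin tendsto_inner)

lemma abs_inner_unit_le_1:
  fixes u v :: "'a::real_inner"
  assumes "norm u = 1" "norm v = 1"
  shows "\<bar>u \<bullet> v\<bar> \<le> 1"
  using Cauchy_Schwarz_ineq2[of u v] assms by simp

lemma sphere_dist_le_pi:
  fixes u v :: "'a::real_inner"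
  assumes "norm u = 1" "norm v = 1"
  shows "sphere_dist u v \<le> pi"
  using abs_inner_unit_le_1[OF assms] by (simp add: sphere_dist_def arccos_ubound)

lemma dist_unit_eq_sin_half_arccos:
  fixes u v :: "'a::real_inner"
  assumes "norm u = 1" "norm v = 1"
  shows "dist u v = 2 * sin (arccos (u \<bullet> v) / 2)"
proof -
  define \<theta> where "\<theta> = arccos (u \<bullet> v)"
  have "-1 \<le> u \<bullet> v" "u \<bullet> v \<le> 1"
    using abs_inner_unit_le_1[OF assms] by auto
  then have "cos \<theta> = u \<bullet> v" "0 \<le> \<theta>" "\<theta> \<le> pi"
    by (auto simp: \<theta>_def arccos_lbound arccos_ubound)
  have "(dist u v)\<^sup>2 = u \<bullet> u - 2 * (u \<bullet> v) + v \<bullet> v"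
    by (simp add: dist_norm power2_norm_eq_inner inner_diff inner_commute)
  also have "\<dots> = 2 - 2 * cos \<theta>"
    using assms \<open>cos \<theta> = u \<bullet> v\<close> by (simp add: dot_square_norm)
  also have "\<dots> = (2 * sin (\<theta> / 2))\<^sup>2"
    using cos_double_sin[of "\<theta> / 2"] by (simp add: power_mult_distrib)
  finally have "(dist u v)\<^sup>2 = (2 * sin (\<theta> / 2))\<^sup>2" .
  moreover have "0 \<le> 2 * sin (\<theta> / 2)"
    using \<open>0 \<le> \<theta>\<close> \<open>\<theta> \<le> pi\<close> by (simp add: sin_ge_zero)
  ultimately show ?thesis
    unfolding \<theta>_def by (meson power2_eq_iff_nonneg zero_le_dist)
qed

lemma dist_unit_le_arccos:
  fixes u v :: "'a::real_inner"
  assumes "norm u = 1" "norm v = 1"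
  shows "dist u v \<le> arccos (u \<bullet> v)"
proof -
  have "0 \<le> arccos (u \<bullet> v)"
    using abs_inner_unit_le_1[OF assms] by (simp add: arccos_lbound)
  then show ?thesis
    using sin_x_le_x[of "arccos (u \<bullet> v) / 2"] by (simp add: dist_unit_eq_sin_half_arccos[OF assms])
qed

lemma arccos_inner_le_iff:
  fixes u v :: "'a::real_inner"
  assumes "norm u = 1" "norm v = 1" "0 \<le> e" "e \<le> pi"
  shows "arccos (u \<bullet> v) \<le> e \<longleftrightarrow> dist u v \<le> 2 * sin (e / 2)"
proof -
  have "0 \<le> arccos (u \<bullet> v)" "arccos (u \<bullet> v) \<le> pi"
    using abs_inner_unit_le_1[OF assms(1,2)] by (auto simp: arccos_lbound arccos_ubound)
  then show ?thesis
    using assms(3,4) by (simp add: dist_unit_eq_sin_half_arccos[OF assms(1,2)] sin_mono_le_eq)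
qed

lemma sphere_diam_le_iff:
  fixes A :: "'a::real_inner set"
  assumes "A \<noteq> {}" "A \<subseteq> sphere 0 1"
  shows "sphere_diam A \<le> d \<longleftrightarrow> (\<forall>u\<in>A. \<forall>v\<in>A. sphere_dist u v \<le> d)"
proof -
  have "bdd_above ((\<lambda>p. sphere_dist (fst p) (snd p)) ` (A \<times> A))"
    using assms(2) by (intro bdd_aboveI2[where M = pi] sphere_dist_le_pi) auto
  then show ?thesis
    unfolding sphere_diam_def using assms(1) by (simp add: cSUP_le_iff)
qed

lemma delta_eq_0_iff:
  assumes "g ` topspace T \<subseteq> sphere 0 1"
  shows "delta T g = 0 \<longleftrightarrow>
    (\<forall>e>0. \<forall>x\<in>topspace T. \<exists>U. openin T U \<and> x \<in> U \<and> sphere_diam (g ` U) \<le> e)"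
proof -
  define D where "D = {d. d \<ge> 0 \<and>
    (\<forall>x\<in>topspace T. \<exists>U. openin T U \<and> x \<in> U \<and> sphere_diam (g ` U) \<le> d)}"
  have upward: "d' \<in> D" if "d \<in> D" "d \<le> d'" for d d'
    using that unfolding D_def by force
  have "pi \<in> D"
  proof -
    have "sphere_diam (g ` topspace T) \<le> pi" if "topspace T \<noteq> {}"
      using assms that by (subst sphere_diam_le_iff) (auto intro!: sphere_dist_le_pi)
    then show ?thesis
      unfolding D_def by (force intro: openin_topspace)
  qed
  have "bdd_below D"
    unfolding D_def by (auto intro: bdd_belowI[where m = 0])
  have "D \<noteq> {}"
    using \<open>pi \<in> D\<close> by blast
  then have "Inf D \<ge> 0"
    by (rule cInf_greatest) (simp add: D_def)
  have "Inf D = 0 \<longleftrightarrow> (\<forall>e>0. e \<in> D)"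
  proof
    assume "Inf D = 0"
    show "\<forall>e>0. e \<in> D"
    proof (intro allI impI)
      fix e :: real assume "e > 0"
      then obtain d where "d \<in> D" "d < e"
        using cInf_lessD[of D e] \<open>pi \<in> D\<close> \<open>Inf D = 0\<close> by auto
      then show "e \<in> D" by (auto intro: upward)
    qed
  next
    assume "\<forall>e>0. e \<in> D"
    then have "Inf D \<le> 0 + e" if "e > 0" for e
      using that \<open>bdd_below D\<close> by (auto intro: cInf_lower)
    then have "Inf D \<le> 0"
      by (rule field_le_epsilon)
    then show "Inf D = 0"
      using \<open>Inf D \<ge> 0\<close> by simp
  qed
  then show ?thesis
    by (simp add: delta_def D_def)
qed

lemma continuous_map_euclidean_iff_ball:
  "continuous_map T euclidean g \<longleftrightarrow>
    (\<forall>x\<in>topspace T. \<forall>r>0. \<exists>U. openin T U \<and> x \<in> U \<and> (\<forall>y\<in>U. g y \<in> ball (g x) r))"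
  using Met_TC.continuous_map_to_metric[of T g] by simp

lemma continuous_map_if_locally_small_sphere_diam:
  assumes sphere: "g ` topspace T \<subseteq> sphere 0 1"
    and small: "\<forall>e>0. \<forall>x\<in>topspace T. \<exists>U. openin T U \<and> x \<in> U \<and> sphere_diam (g ` U) \<le> e"
  shows "continuous_map T euclidean g"
  unfolding continuous_map_euclidean_iff_ball
proof (intro ballI allI impI)
  fix x and r :: real
  assume "x \<in> topspace T" "r > 0"
  then obtain U where U: "openin T U" "x \<in> U" "sphere_diam (g ` U) \<le> r / 2"
    using small by (meson half_gt_zero)
  have "g ` U \<subseteq> sphere 0 1"
    using sphere openin_subset[OF U(1)] by blast
  have "g ` U \<noteq> {}"
    using U(2) by blast
  have small_U: "\<forall>u\<in>g ` U. \<forall>v\<in>g ` U. sphere_dist u v \<le> r / 2"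
    using sphere_diam_le_iff[OF \<open>g ` U \<noteq> {}\<close> \<open>g ` U \<subseteq> sphere 0 1\<close>] U(3) by blast
  have "dist (g x) (g y) < r" if "y \<in> U" for y
  proof -
    have unit: "norm (g x) = 1" "norm (g y) = 1"
      using \<open>g ` U \<subseteq> sphere 0 1\<close> U(2) that by auto
    have "dist (g x) (g y) \<le> sphere_dist (g x) (g y)"
      unfolding sphere_dist_def by (rule dist_unit_le_arccos[OF unit])
    also have "\<dots> \<le> r / 2"
      using small_U U(2) that by blast
    finally show ?thesis
      using \<open>r > 0\<close> by linarith
  qed
  then show "\<exists>U. openin T U \<and> x \<in> U \<and> (\<forall>y\<in>U. g y \<in> ball (g x) r)"
    using U by auto
qed

lemma locally_small_sphere_diam_if_continuous_map:
  assumes sphere: "g ` topspace T \<subseteq> sphere 0 1"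
    and cont: "continuous_map T euclidean g" and "x \<in> topspace T" "e > 0"
  shows "\<exists>U. openin T U \<and> x \<in> U \<and> sphere_diam (g ` U) \<le> e"
proof -
  define e' where "e' = min e pi"
  have e': "0 < e'" "e' \<le> pi" "e' \<le> e"
    using \<open>e > 0\<close> by (auto simp: e'_def)
  define r where "r = 2 * sin (e' / 2)"
  have "r > 0"
    using e' by (simp add: r_def sin_gt_zero)
  then obtain U where U: "openin T U" "x \<in> U" "\<forall>y\<in>U. g y \<in> ball (g x) (r / 2)"
    using cont \<open>x \<in> topspace T\<close> unfolding continuous_map_euclidean_iff_ball
    by (meson half_gt_zero)
  have "g ` U \<subseteq> sphere 0 1"
    using sphere openin_subset[OF U(1)] by blast
  have "sphere_dist (g y) (g y') \<le> e" if "y \<in> U" "y' \<in> U" for y y'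
  proof -
    have unit: "norm (g y) = 1" "norm (g y') = 1"
      using \<open>g ` U \<subseteq> sphere 0 1\<close> that by auto
    have "dist (g x) (g y) < r / 2" "dist (g x) (g y') < r / 2"
      using U(3) that by auto
    then have "dist (g y) (g y') < r"
      by (rule dist_triangle_half_r)
    then have "arccos (g y \<bullet> g y') \<le> e'"
      using arccos_inner_le_iff[OF unit, of e'] e' by (simp add: r_def)
    then show ?thesis
      using e' by (simp add: sphere_dist_def)
  qed
  moreover have "g ` U \<noteq> {}"
    using U(2) by blast
  ultimately have "sphere_diam (g ` U) \<le> e"
    by (simp add: sphere_diam_le_iff[OF _ \<open>g ` U \<subseteq> sphere 0 1\<close>])
  then show ?thesis
    using U by blast
qed

lemma delta_eq_0_iff_continuous_map:
  assumes "g ` topspace T \<subseteq> sphere 0 1"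
  shows "delta T g = 0 \<longleftrightarrow> continuous_map T euclidean g"
  unfolding delta_eq_0_iff[OF assms]
  using continuous_map_if_locally_small_sphere_diam[OF assms]
    locally_small_sphere_diam_if_continuous_map[OF assms]
  by blast

lemma topspace_conf2:
  "topspace (conf2 X) = {(x, y). x \<in> topspace X \<and> y \<in> topspace X \<and> x \<noteq> y}"
  by (auto simp: conf2_def)

lemma Phi_Pair: "Phi f (x, y) = sgn (f x - f y)"
  by (simp add: Phi_def sgn_div_norm)

lemma Phi_image_subset_sphere:
  assumes "inj_on f (topspace X)"
  shows "Phi f ` topspace (conf2 X) \<subseteq> sphere 0 1"
  using assms by (auto simp: topspace_conf2 Phi_Pair norm_sgn dest: inj_onD)

lemma continuous_map_Phi:
  assumes inj: "inj_on f (topspace X)" and cont: "continuous_map X euclidean f"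
  shows "continuous_map (conf2 X) euclidean (Phi f)"
proof -
  have "continuous_map (conf2 X) euclidean (f \<circ> fst)" "continuous_map (conf2 X) euclidean (f \<circ> snd)"
    unfolding conf2_def
    by (auto intro: continuous_map_compose[OF continuous_map_from_subtopology cont]
        continuous_map_fst continuous_map_snd)
  moreover have "norm (f (fst p) - f (snd p)) \<noteq> 0" if "p \<in> topspace (conf2 X)" for p
    using that inj by (auto simp: topspace_conf2 dest: inj_onD)
  ultimately show ?thesis
    unfolding Phi_def by (intro continuous_intros) (auto simp: o_def)
qed

lemma continuous_map_conf2_slice:
  assumes "continuous_map (conf2 X) Y g" "z \<in> topspace X" "z \<notin> A"
  shows "continuous_map (subtopology X A) Y (\<lambda>x. g (x, z))"
proof -
  have "continuous_map (subtopology X A) (conf2 X) (\<lambda>x. (x, z))"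
    unfolding conf2_def using assms(2,3)
    by (intro continuous_map_into_subtopology continuous_map_pairedI continuous_map_from_subtopology)
      auto
  then show ?thesis
    using continuous_map_compose[OF _ assms(1)] by (simp add: o_def)
qed

lemma collinear_if_sgn_diff_eq:
  fixes a b c :: "'a::real_normed_vector"
  assumes "sgn (a - c) = sgn (b - c)"
  shows "collinear {a, b, c}"
proof -
  have "b - c = norm (b - c) *\<^sub>R sgn (b - c)"
    by (cases "b = c") (simp_all add: sgn_div_norm)
  also have "\<dots> = (norm (b - c) / norm (a - c)) *\<^sub>R (a - c)"
    unfolding assms[symmetric] by (simp add: sgn_div_norm divide_inverse_commute)
  finally have "collinear {0, a - c, b - c}"
    by (auto simp: collinear_lemma)
  then have "collinear {a, c, b}"
    using collinear_3[of a c b] by simp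
  then show ?thesis
    by (simp add: insert_commute)
qed

lemma sgn_diff_inner_square_neq_1:
  fixes p a b :: "'a::real_inner"
  assumes "\<not> collinear {p, a, b}"
  shows "(sgn (p - a) \<bullet> sgn (p - b))\<^sup>2 \<noteq> 1"
proof
  assume "(sgn (p - a) \<bullet> sgn (p - b))\<^sup>2 = 1"
  moreover have "p \<noteq> a" "p \<noteq> b"
    using assms by (auto simp: insert_commute)
  ultimately have "\<bar>sgn (p - a) \<bullet> sgn (p - b)\<bar> = norm (sgn (p - a)) * norm (sgn (p - b))"
    by (auto simp: norm_sgn power2_eq_1_iff)
  then have "collinear {0, sgn (p - a), sgn (p - b)}"
    by (simp only: norm_cauchy_schwarz_equal)
  then have "collinear {0, p - a, p - b}"
    using \<open>p \<noteq> a\<close> \<open>p \<noteq> b\<close> by (simp add: sgn_div_norm collinear_scaleR_iff)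
  then have "collinear {0, a - p, b - p}"
    using collinear_scaleR_iff[of "- 1" "a - p" "- 1" "b - p"] by simp
  then have "collinear {a, p, b}"
    using collinear_3[of a p b] by simp
  then show False
    using assms by (simp add: insert_commute)
qed

text \<open>For unit vectors \<open>u\<close>, \<open>v\<close> that are not parallel, the point of the line \<open>a + \<real> u\<close>
  closest to the line \<open>b + \<real> v\<close>; in particular their intersection point if they meet.\<close>
definition triangulate :: "'a \<Rightarrow> 'a \<Rightarrow> 'a \<Rightarrow> 'a \<Rightarrow> 'a::real_inner" where
  "triangulate a b u v = a + (((b - a) \<bullet> u - (u \<bullet> v) * ((b - a) \<bullet> v)) / (1 - (u \<bullet> v)\<^sup>2)) *\<^sub>R u"

lemma triangulate_sgn_diff:
  fixes p a b :: "'a::real_inner"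
  assumes "(sgn (p - a) \<bullet> sgn (p - b))\<^sup>2 \<noteq> 1"
  shows "triangulate a b (sgn (p - a)) (sgn (p - b)) = p"
proof -
  define u v c where "u = sgn (p - a)" and "v = sgn (p - b)" and "c = u \<bullet> v"
  define A B where "A = norm (p - a)" and "B = norm (p - b)"
  have pa: "p - a = A *\<^sub>R u" and pb: "p - b = B *\<^sub>R v"
    by (cases "p = a", simp_all add: u_def A_def sgn_div_norm)
      (cases "p = b", simp_all add: v_def B_def sgn_div_norm)
  have "b - a = (p - a) - (p - b)"
    by simp
  also have "\<dots> = A *\<^sub>R u - B *\<^sub>R v"
    by (simp only: pa pb)
  finally have diff: "b - a = A *\<^sub>R u - B *\<^sub>R v" .
  have uu: "A * (u \<bullet> u) = A" and vv: "B * (v \<bullet> v) = B"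
    by (simp_all add: u_def v_def A_def B_def flip: power2_norm_eq_inner add: norm_sgn)
  have wu: "(b - a) \<bullet> u = A - B * c"
    unfolding diff by (simp add: inner_diff_left uu c_def inner_commute[of v u])
  have wv: "(b - a) \<bullet> v = A * c - B"
    unfolding diff by (simp add: inner_diff_left vv c_def)
  have "(b - a) \<bullet> u - c * ((b - a) \<bullet> v) = A * (1 - c\<^sup>2)"
    unfolding wu wv by (simp add: algebra_simps power2_eq_square)
  moreover have "1 - c\<^sup>2 \<noteq> 0"
    using assms by (simp add: c_def u_def v_def)
  ultimately have "triangulate a b u v = a + A *\<^sub>R u"
    by (simp add: triangulate_def c_def)
  also have "\<dots> = p"
    using pa by (metis add.commute diff_add_cancel)
  finally show ?thesis
    by (simp only: u_def v_def)
qed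

lemma exists_noncollinear_triple:
  assumes "\<not> collinear S" "a \<in> S"
  shows "\<exists>b\<in>S. \<exists>c\<in>S. \<not> collinear {a, b, c}"
proof -
  have "\<not> S \<subseteq> {a}"
    using assms(1) collinear_subset collinear_sing by blast
  then obtain b where "b \<in> S" "b \<noteq> a"
    by blast
  then have "insert a (insert b S) = S"
    using assms(2) by blast
  then have "\<not> (\<forall>c\<in>S. collinear {a, b, c})"
    using assms(1) collinear_triples[of a b S] \<open>b \<noteq> a\<close> by simp
  then show ?thesis
    using \<open>b \<in> S\<close> by blast
qed

lemma t1_space_if_continuous_Phi:
  fixes f :: "'a \<Rightarrow> 'b::euclidean_space"
  assumes inj: "inj_on f (topspace X)" and noncollinear: "\<not> collinear (f ` topspace X)"
    and cont: "continuous_map (conf2 X) euclidean (Phi f)"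
  shows "t1_space X"
  unfolding t1_space_def
proof (intro ballI impI)
  fix x y
  assume x: "x \<in> topspace X" and y: "y \<in> topspace X" and "x \<noteq> y"
  show "\<exists>U. openin X U \<and> x \<in> U \<and> y \<notin> U"
  proof (rule ccontr)
    assume inseparable: "\<nexists>U. openin X U \<and> x \<in> U \<and> y \<notin> U"
    have "collinear {f x, f y, f z}" if z: "z \<in> topspace X - {x, y}" for z
    proof -
      let ?S = "topspace X - {z}"
      have "continuous_map (subtopology X ?S) euclidean (\<lambda>w. Phi f (w, z))"
        using cont z by (intro continuous_map_conf2_slice) auto
      from continuous_map_image_closure_subset[OF this, of "{y}"]
      have "(\<lambda>w. Phi f (w, z)) ` (subtopology X ?S closure_of {y}) \<subseteq>
          euclidean closure_of {Phi f (y, z)}"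
        by simp
      moreover have "x \<in> X closure_of {y}"
        using inseparable x by (auto simp: in_closure_of)
      then have "x \<in> subtopology X ?S closure_of {y}"
        using x y z by (auto simp: closure_of_subtopology Int_insert_right)
      ultimately have "Phi f (x, z) \<in> euclidean closure_of {Phi f (y, z)}"
        by blast
      then have "sgn (f x - f z) = sgn (f y - f z)"
        by (simp add: Phi_Pair closure_of_singleton t1_space_euclidean)
      then show ?thesis
        by (rule collinear_if_sgn_diff_eq)
    qed
    moreover have "f x \<noteq> f y"
      using inj x y \<open>x \<noteq> y\<close> by (auto dest: inj_onD)
    ultimately have "collinear (insert (f x) (insert (f y) (f ` (topspace X - {x, y}))))"
      using collinear_triples[of "f x" "f y"] by blast
    moreover have "insert (f x) (insert (f y) (f ` (topspace X - {x, y}))) = f ` topspace X"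
      using x y by auto
    ultimately show False
      using noncollinear by simp
  qed
qed

definition nonparallel_locus :: "'a topology \<Rightarrow> ('a \<Rightarrow> 'b::real_inner) \<Rightarrow> 'a \<Rightarrow> 'a \<Rightarrow> 'a set" where
  "nonparallel_locus X f y z = {x \<in> topspace X - {y, z}. (Phi f (x, y) \<bullet> Phi f (x, z))\<^sup>2 \<noteq> 1}"

lemma openin_nonparallel_locus:
  assumes "t1_space X" "continuous_map (conf2 X) euclidean (Phi f)"
    and "y \<in> topspace X" "z \<in> topspace X"
  shows "openin X (nonparallel_locus X f y z)"
proof -
  let ?S = "topspace X - {y, z}"
  have "openin X ?S"
    using assms(1,3,4) by (intro openin_diff openin_topspace) (simp add: t1_space_closedin_finite)
  have "continuous_map (subtopology X ?S) euclidean (\<lambda>x. (Phi f (x, y) \<bullet> Phi f (x, z))\<^sup>2)"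
    using assms(2-4) by (intro continuous_intros continuous_map_conf2_slice) auto
  then have "openin (subtopology X ?S)
      {x \<in> topspace (subtopology X ?S). (Phi f (x, y) \<bullet> Phi f (x, z))\<^sup>2 \<in> - {1}}"
    by (rule openin_continuous_map_preimage) auto
  then show ?thesis
    using openin_trans_full[OF _ \<open>openin X ?S\<close>] by (simp add: nonparallel_locus_def Int_def)
qed

lemma continuous_map_on_nonparallel_locus:
  assumes "continuous_map (conf2 X) euclidean (Phi f)" "y \<in> topspace X" "z \<in> topspace X"
  shows "continuous_map (subtopology X (nonparallel_locus X f y z)) euclidean f"
proof (rule continuous_map_eq)
  show "continuous_map (subtopology X (nonparallel_locus X f y z)) euclidean
      (\<lambda>x. triangulate (f y) (f z) (Phi f (x, y)) (Phi f (x, z)))"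
    unfolding triangulate_def using assms
    by (intro continuous_intros continuous_map_conf2_slice) (auto simp: nonparallel_locus_def)
  show "triangulate (f y) (f z) (Phi f (x, y)) (Phi f (x, z)) = f x"
    if "x \<in> topspace (subtopology X (nonparallel_locus X f y z))" for x
    using that triangulate_sgn_diff by (auto simp: nonparallel_locus_def Phi_Pair)
qed

lemma continuous_map_if_continuous_Phi:
  fixes f :: "'a \<Rightarrow> 'b::euclidean_space"
  assumes inj: "inj_on f (topspace X)" and noncollinear: "\<not> collinear (f ` topspace X)"
    and cont: "continuous_map (conf2 X) euclidean (Phi f)"
  shows "continuous_map X euclidean f"
proof (rule pasting_lemma[where I = "topspace X \<times> topspace X" and f = "\<lambda>_. f"
      and T = "\<lambda>(y, z). nonparallel_locus X f y z"])
  have "t1_space X"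
    using assms by (rule t1_space_if_continuous_Phi)
  then show "openin X ((\<lambda>(y, z). nonparallel_locus X f y z) i)" if "i \<in> topspace X \<times> topspace X" for i
    using that cont by (auto intro: openin_nonparallel_locus)
  show "continuous_map (subtopology X ((\<lambda>(y, z). nonparallel_locus X f y z) i)) euclidean f"
    if "i \<in> topspace X \<times> topspace X" for i
    using that cont by (auto intro: continuous_map_on_nonparallel_locus)
  show "\<exists>j. j \<in> topspace X \<times> topspace X \<and> x \<in> (\<lambda>(y, z). nonparallel_locus X f y z) j \<and> f x = f x"
    if x: "x \<in> topspace X" for x
  proof -
    obtain y z where yz: "y \<in> topspace X" "z \<in> topspace X" and "\<not> collinear {f x, f y, f z}"
      using exists_noncollinear_triple[OF noncollinear] x by blast
    then have "x \<noteq> y" "x \<noteq> z" "(Phi f (x, y) \<bullet> Phi f (x, z))\<^sup>2 \<noteq> 1"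
      by (auto simp: Phi_Pair sgn_diff_inner_square_neq_1 insert_commute)
    then show ?thesis
      using x yz by (auto simp: nonparallel_locus_def)
  qed
qed simp

theorem theorem3p7:
  fixes X :: "'a topology" and f :: "'a \<Rightarrow> 'b::euclidean_space"
  assumes "inj_on f (topspace X)"
    and "\<not> collinear (f ` topspace X)"
  shows "alpha X f = 0 \<longleftrightarrow> continuous_map X euclidean f"
proof -
  have "alpha X f = 0 \<longleftrightarrow> continuous_map (conf2 X) euclidean (Phi f)"
    unfolding alpha_def by (rule delta_eq_0_iff_continuous_map[OF Phi_image_subset_sphere[OF assms(1)]])
  also have "\<dots> \<longleftrightarrow> continuous_map X euclidean f"
    using assms continuous_map_Phi continuous_map_if_continuous_Phi by blast
  finally show ?thesis .
qed

end
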